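(* Let $X$ be a separable metric space, $g$ a Hausdorff function and $E\subseteq X$. Then $\underline{\mathcal P}^g_0(E)=0$ if and only if $\underline{\mathcal B}^g_0(E)=0$.
   Context: In a metric space $(X,d)$: $\operatorname{gap}F=\inf\{d(x,y):x,y\in F,x\neq y\}$, $C_\delta(E)=\sup\{|F|:F\subseteq E,\operatorname{gap}F>\delta\}$. A Hausdorff function is a nondecreasing $g:(0,\infty)\to(0,\infty)$. A scale is a set $\Delta\subseteq(0,\infty)$ with $0$ in its closure. A packing is a family $\pi=\{(x_i,r_i):i\in I\}\subseteq X\times(0,\infty)$ with $d(x_i,x_j)>r_i$ for all $i\ne j$; it is a packing of $E$ if all $x_i\in E$, $\Delta$-valued if all $r_i\in\Delta$, $\delta$-fine if all $r_i\le\delta$; $g(\pi)=\sum_ig(r_i)$. $\mathcal P^g_{\Delta,0}(E)=\inf_{\delta>0}\sup\{g(\pi):\pi$ a $\Delta$-valued $\delta$-fine packing of $E\}$; $\underline{\mathcal P}^g_0(E)=\inf_\Delta\mathcal P^g_{\Delta,0}(E)$ (infimum over all scales); $\underline{\mathcal B}^g_0(E)=\liminf_{\delta\to0}C_\delta(E)g(\delta)$. *)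

theory Defs
  imports "HOL-Analysis.Analysis"
begin

definition ecard :: "'a set \<Rightarrow> ennreal" where
  "ecard F = (if finite F then of_nat (card F) else top)"

text \<open>gap F = inf of distances between distinct points (inf of the empty set is \<infinity>).\<close>
definition gap :: "'a::metric_space set \<Rightarrow> ennreal" where
  "gap F = (INF p \<in> {(x, y). x \<in> F \<and> y \<in> F \<and> x \<noteq> y}. ennreal (dist (fst p) (snd p)))"

definition C_delta :: "'a::metric_space set \<Rightarrow> real \<Rightarrow> ennreal" where
  "C_delta E \<delta> = (SUP F \<in> {F. F \<subseteq> E \<and> ennreal \<delta> < gap F}. ecard F)"

definition hausdorff_function :: "(real \<Rightarrow> real) \<Rightarrow> bool" where
  "hausdorff_function g \<longleftrightarrow> mono_on {0<..} g \<and> (\<forall>t>0. g t > 0)"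

definition scale :: "real set \<Rightarrow> bool" where
  "scale \<Delta> \<longleftrightarrow> \<Delta> \<subseteq> {0<..} \<and> 0 \<in> closure \<Delta>"

text \<open>A packing, represented as the set of its pairs (centre, radius). Since the
  condition forces distinct indices to have distinct centres, this is the same as an
  indexed family.\<close>
definition packing :: "('a::metric_space \<times> real) set \<Rightarrow> bool" where
  "packing P \<longleftrightarrow> (\<forall>p\<in>P. snd p > 0) \<and>
     (\<forall>p\<in>P. \<forall>q\<in>P. p \<noteq> q \<longrightarrow> dist (fst p) (fst q) > snd p)"

definition packing_of :: "('a::metric_space \<times> real) set \<Rightarrow> 'a set \<Rightarrow> bool" where
  "packing_of P E \<longleftrightarrow> packing P \<and> fst ` P \<subseteq> E"

definition gsum :: "(real \<Rightarrow> real) \<Rightarrow> ('a \<times> real) set \<Rightarrow> ennreal" where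
  "gsum g P = (\<Sum>\<^sub>\<infinity>p\<in>P. ennreal (g (snd p)))"

definition packing_premeasure0 :: "(real \<Rightarrow> real) \<Rightarrow> real set \<Rightarrow> 'a::metric_space set \<Rightarrow> ennreal" where
  "packing_premeasure0 g \<Delta> E =
     (INF \<delta> \<in> {0<..}. SUP P \<in> {P. packing_of P E \<and> snd ` P \<subseteq> \<Delta> \<and> (\<forall>p\<in>P. snd p \<le> \<delta>)}.
        gsum g P)"

definition lower_packing_premeasure0 :: "(real \<Rightarrow> real) \<Rightarrow> 'a::metric_space set \<Rightarrow> ennreal" where
  "lower_packing_premeasure0 g E = (INF \<Delta> \<in> {\<Delta>. scale \<Delta>}. packing_premeasure0 g \<Delta> E)"

definition lower_box0 :: "(real \<Rightarrow> real) \<Rightarrow> 'a::metric_space set \<Rightarrow> ennreal" where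
  "lower_box0 g E = Liminf (at_right 0) (\<lambda>\<delta>. C_delta E \<delta> * ennreal (g \<delta>))"

end

theory Submission
  imports Defs
begin

text \<open>Attaching the radius r to every point of a set of gap > r gives a packing, so
  C_r(E) g(r) is bounded by the packing sums at every r \<in> \<Delta>; since \<Delta> accumulates at 0,
  the lower box content is at most every P^g_{\<Delta>,0}(E). Conversely, if the lower box content
  vanishes, pick radii d_n \<rightarrow> 0 with C_{d_n}(E) g(d_n) < 2^{-n-1} y and let \<Delta> = {d_n}. In a
  \<Delta>-valued packing the centres of a common radius d_n form a set of gap > d_n, so grouping
  the sum by radius bounds it by y.\<close>

lemma gap_less_imp_less_dist:
  assumes "ennreal r < gap F" "x \<in> F" "y \<in> F" "x \<noteq> y" "0 \<le> r"
  shows "r < dist x y"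
proof -
  have "gap F \<le> ennreal (dist x y)"
    unfolding gap_def by (rule INF_lower2[of "(x, y)"]) (use assms in auto)
  with assms(1) have "ennreal r < ennreal (dist x y)" by order
  with assms(5) show ?thesis by (simp add: ennreal_less_iff)
qed

lemma less_gap_finite:
  assumes "finite F" and sep: "\<And>x y. x \<in> F \<Longrightarrow> y \<in> F \<Longrightarrow> x \<noteq> y \<Longrightarrow> r < dist x y"
  shows "ennreal r < gap F"
proof (cases "{(x, y). x \<in> F \<and> y \<in> F \<and> x \<noteq> y} = {}")
  case True
  then have "gap F = top"
    unfolding gap_def by (simp only: INF_empty)
  then show ?thesis by simp
next
  case False
  have "finite {(x, y). x \<in> F \<and> y \<in> F \<and> x \<noteq> y}"
    by (rule finite_subset[of _ "F \<times> F"]) (use \<open>finite F\<close> in auto)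
  moreover have "ennreal r < ennreal (dist x y)" if "x \<in> F" "y \<in> F" "x \<noteq> y" for x y
    using sep[OF that] that(3) by (intro ennreal_lessI) auto
  ultimately show ?thesis
    using False unfolding gap_def by (subst finite_less_Inf_iff) auto
qed

lemma packing_of_uniform_radius:
  assumes "F \<subseteq> E" "ennreal r < gap F" "0 < r"
  shows "packing_of ((\<lambda>x. (x, r)) ` F) E"
  unfolding packing_of_def packing_def
  using assms gap_less_imp_less_dist[OF assms(2)] by auto

lemma gsum_uniform_radius: "gsum g ((\<lambda>x. (x, r)) ` F) = ecard F * ennreal (g r)"
proof -
  have "gsum g ((\<lambda>x. (x, r)) ` F) = (\<Sum>\<^sub>\<infinity>x\<in>F. ennreal (g r))"
    unfolding gsum_def by (subst infsum_reindex) (auto simp: inj_on_def o_def)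
  also have "\<dots> = ecard F * ennreal (g r)"
  proof (cases "finite F")
    case True
    then show ?thesis by (simp add: ecard_def)
  next
    case infinite: False
    show ?thesis
    proof (cases "g r > 0")
      case True
      have "(\<Sum>\<^sub>\<infinity>x\<in>F. ennreal (g r)) = \<infinity>"
        by (rule infsum_superconst_infinite_ennreal[where b = "ennreal (g r)"])
           (use True infinite in auto)
      then show ?thesis using True infinite by (simp add: ecard_def)
    next
      case False
      then have "ennreal (g r) = 0" by (simp add: ennreal_eq_0_iff)
      then show ?thesis by simp
    qed
  qed
  finally show ?thesis .
qed

definition packing_sup :: "(real \<Rightarrow> real) \<Rightarrow> real set \<Rightarrow> 'a::metric_space set \<Rightarrow> real \<Rightarrow> ennreal" where
  "packing_sup g \<Delta> E \<delta> =
     (SUP P \<in> {P. packing_of P E \<and> snd ` P \<subseteq> \<Delta> \<and> (\<forall>p\<in>P. snd p \<le> \<delta>)}. gsum g P)"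

lemma packing_premeasure0_eq_INF_packing_sup:
  "packing_premeasure0 g \<Delta> E = (INF \<delta> \<in> {0<..}. packing_sup g \<Delta> E \<delta>)"
  unfolding packing_premeasure0_def packing_sup_def ..

lemma C_delta_mult_le_packing_sup:
  assumes "r \<in> \<Delta>" "0 < r" "r \<le> \<delta>"
  shows "C_delta E r * ennreal (g r) \<le> packing_sup g \<Delta> E \<delta>"
proof -
  have "C_delta E r * ennreal (g r) = (SUP F \<in> {F. F \<subseteq> E \<and> ennreal r < gap F}. ecard F * ennreal (g r))"
    unfolding C_delta_def by (rule SUP_mult_right_ennreal)
  also have "\<dots> \<le> packing_sup g \<Delta> E \<delta>"
    unfolding packing_sup_def gsum_uniform_radius[symmetric]
    by (rule SUP_least, rule SUP_upper) (use assms packing_of_uniform_radius in auto)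
  finally show ?thesis .
qed

lemma Liminf_le_if_frequently_le:
  fixes f :: "'a \<Rightarrow> 'b::complete_lattice"
  assumes "\<exists>\<^sub>F x in F. f x \<le> c"
  shows "Liminf F f \<le> c"
proof (rule Liminf_least)
  fix P assume "eventually P F"
  with assms have "\<exists>\<^sub>F x in F. f x \<le> c \<and> P x"
    by (rule frequently_eventually_frequently)
  then obtain x where "P x" "f x \<le> c"
    by (auto dest: frequently_ex)
  then show "(INF x\<in>Collect P. f x) \<le> c"
    by (auto intro: INF_lower2)
qed

lemma frequently_less_if_Liminf_less:
  fixes f :: "'a \<Rightarrow> 'b::complete_linorder"
  assumes "Liminf F f < c"
  shows "\<exists>\<^sub>F x in F. f x < c"
  using assms Liminf_bounded[of c f F]
  by (auto simp: frequently_def not_less)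

lemma scale_frequently_at_right:
  assumes "scale \<Delta>"
  shows "\<exists>\<^sub>F r in at_right 0. r \<in> \<Delta>"
  using assms unfolding scale_def
  by (auto simp: frequently_def eventually_at_right_field closure_approachable dist_real_def)
     (metis abs_of_pos greaterThan_iff subsetD)

lemma lower_box0_le_packing_premeasure0:
  assumes "scale \<Delta>"
  shows "lower_box0 g E \<le> packing_premeasure0 g \<Delta> E"
  unfolding packing_premeasure0_eq_INF_packing_sup
proof (rule INF_greatest)
  fix \<delta> :: real assume "\<delta> \<in> {0<..}"
  have "\<exists>\<^sub>F r in at_right 0. r \<in> \<Delta>"
    using assms by (rule scale_frequently_at_right)
  moreover have "\<forall>\<^sub>F r in at_right 0. 0 < r \<and> r \<le> \<delta>"
    using \<open>\<delta> \<in> {0<..}\<close> by (auto simp: eventually_at_right_field intro!: exI[of _ \<delta>])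
  ultimately have "\<exists>\<^sub>F r in at_right 0. C_delta E r * ennreal (g r) \<le> packing_sup g \<Delta> E \<delta>"
    by (rule frequently_eventually_frequently[THEN frequently_elim1])
       (auto intro: C_delta_mult_le_packing_sup)
  then show "lower_box0 g E \<le> packing_sup g \<Delta> E \<delta>"
    unfolding lower_box0_def by (rule Liminf_le_if_frequently_le)
qed

lemma lower_box0_le_lower_packing_premeasure0:
  "lower_box0 g E \<le> lower_packing_premeasure0 g E"
  unfolding lower_packing_premeasure0_def
  by (auto intro: INF_greatest lower_box0_le_packing_premeasure0)

lemma card_radius_le_C_delta:
  assumes P: "packing_of P E" and S: "finite S" "S \<subseteq> P"
  shows "of_nat (card {p\<in>S. snd p = r}) \<le> C_delta E r"
proof -
  define F where "F = fst ` {p\<in>S. snd p = r}"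
  have "card F = card {p\<in>S. snd p = r}"
    unfolding F_def by (rule card_image) (auto simp: inj_on_def prod_eq_iff)
  have "finite F" "F \<subseteq> E"
    using P S unfolding F_def packing_of_def by auto
  moreover have "ennreal r < gap F"
  proof (rule less_gap_finite[OF \<open>finite F\<close>])
    fix x y assume "x \<in> F" "y \<in> F" "x \<noteq> y"
    obtain p q where "p \<in> S" "q \<in> S" "snd p = r" "x = fst p" "y = fst q"
      using \<open>x \<in> F\<close> \<open>y \<in> F\<close> unfolding F_def by blast
    moreover from this \<open>x \<noteq> y\<close> have "p \<noteq> q" by auto
    moreover have "p \<in> P" "q \<in> P"
      using \<open>p \<in> S\<close> \<open>q \<in> S\<close> S(2) by auto
    ultimately show "r < dist x y"
      using P unfolding packing_of_def packing_def by auto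
  qed
  ultimately have "ecard F \<le> C_delta E r"
    unfolding C_delta_def by (intro SUP_upper) auto
  with \<open>card F = _\<close> \<open>finite F\<close> show ?thesis
    by (simp add: ecard_def)
qed

lemma gsum_le_suminf_if_radii_bounded:
  assumes P: "packing_of P E" "snd ` P \<subseteq> range d"
    and bound: "\<And>n. C_delta E (d n) * ennreal (g (d n)) \<le> w n"
  shows "gsum g P \<le> (\<Sum>n. w n)"
  unfolding gsum_def
proof (rule infsum_le_finite_sums)
  show "(\<lambda>p. ennreal (g (snd p))) summable_on P"
    by (rule nonneg_summable_on_complete) simp
  fix S assume S: "finite S" "S \<subseteq> P"
  define idx where "idx = inv_into UNIV d"
  have radii: "snd ` S \<subseteq> range d"
    using S P by auto
  have "(\<Sum>p\<in>S. ennreal (g (snd p))) = (\<Sum>r\<in>snd ` S. \<Sum>p\<in>{p\<in>S. snd p = r}. ennreal (g (snd p)))"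
    by (rule sum.image_gen[OF S(1)])
  also have "\<dots> = (\<Sum>r\<in>snd ` S. of_nat (card {p\<in>S. snd p = r}) * ennreal (g r))"
    by (rule sum.cong) auto
  also have "\<dots> \<le> (\<Sum>r\<in>snd ` S. w (idx r))"
  proof (rule sum_mono)
    fix r assume "r \<in> snd ` S"
    with radii have "r \<in> range d" by blast
    then have "d (idx r) = r"
      unfolding idx_def by (rule f_inv_into_f)
    have "of_nat (card {p\<in>S. snd p = r}) * ennreal (g r) \<le> C_delta E r * ennreal (g r)"
      by (rule mult_right_mono[OF card_radius_le_C_delta[OF P(1) S]]) simp
    also have "\<dots> \<le> w (idx r)"
      using bound[of "idx r"] \<open>d (idx r) = r\<close> by simp
    finally show "of_nat (card {p\<in>S. snd p = r}) * ennreal (g r) \<le> w (idx r)" .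
  qed
  also have "\<dots> = (\<Sum>n\<in>idx ` snd ` S. w n)"
    using inj_on_inv_into[OF radii] unfolding idx_def by (simp add: sum.reindex)
  also have "\<dots> \<le> (\<Sum>n. w n)"
    using S(1) by (intro sum_le_suminf summableI) auto
  finally show "(\<Sum>p\<in>S. ennreal (g (snd p))) \<le> (\<Sum>n. w n)" .
qed

lemma scale_range_if_bounded_by_inverse:
  assumes "\<And>n. 0 < d n" "\<And>n. d n < 1 / real (Suc n)"
  shows "scale (range d)"
  unfolding scale_def
proof
  show "range d \<subseteq> {0<..}"
    using assms by auto
  show "0 \<in> closure (range d)"
    unfolding closure_approachable
  proof (intro allI impI)
    fix e :: real assume "e > 0"
    then obtain n where "1 / real (Suc n) < e"
      using reals_Archimedean by (auto simp: inverse_eq_divide)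
    then have "dist (d n) 0 < e"
      using assms[of n] by simp
    then show "\<exists>x\<in>range d. dist x 0 < e" by blast
  qed
qed

lemma scale_with_small_box_counts:
  fixes w :: "nat \<Rightarrow> ennreal"
  assumes "lower_box0 g E = 0" "\<And>n. 0 < w n"
  obtains d where "scale (range d)" "\<And>n. C_delta E (d n) * ennreal (g (d n)) \<le> w n"
proof -
  have "\<exists>r. 0 < r \<and> r < 1 / real (Suc n) \<and> C_delta E r * ennreal (g r) < w n" for n
  proof -
    have "\<exists>\<^sub>F r in at_right 0. C_delta E r * ennreal (g r) < w n"
      using assms unfolding lower_box0_def by (intro frequently_less_if_Liminf_less) auto
    moreover have "\<forall>\<^sub>F r in at_right 0. 0 < r \<and> r < 1 / real (Suc n)"
      by (auto simp: eventually_at_right_field intro!: exI[of _ "1 / real (Suc n)"])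
    ultimately have "\<exists>\<^sub>F r in at_right 0. C_delta E r * ennreal (g r) < w n \<and> 0 < r \<and> r < 1 / real (Suc n)"
      by (rule frequently_eventually_frequently)
    then show ?thesis
      by (auto dest: frequently_ex)
  qed
  then obtain d where pos: "\<And>n. 0 < d n" and small: "\<And>n. d n < 1 / real (Suc n)"
    and bound: "\<And>n. C_delta E (d n) * ennreal (g (d n)) < w n"
    by metis
  show ?thesis
  proof (rule that)
    show "scale (range d)"
      using pos small by (rule scale_range_if_bounded_by_inverse)
    show "C_delta E (d n) * ennreal (g (d n)) \<le> w n" for n
      using bound[of n] by (rule less_imp_le)
  qed
qed

lemma lower_packing_premeasure0_eq_0_if_lower_box0:
  assumes "lower_box0 g E = 0"
  shows "lower_packing_premeasure0 g E = 0"
proof -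
  have "lower_packing_premeasure0 g E \<le> y" if "0 < y" for y
  proof -
    define w where "w n = y * ennreal ((1/2) ^ Suc n)" for n
    have w_pos: "0 < w n" for n
      using \<open>0 < y\<close> unfolding w_def by (simp add: ennreal_zero_less_mult_iff)
    obtain d where "scale (range d)"
      and bound: "\<And>n. C_delta E (d n) * ennreal (g (d n)) \<le> w n"
      using scale_with_small_box_counts[of g E w, OF assms w_pos] by blast
    have "(\<Sum>n. w n) = y * (\<Sum>n. ennreal ((1/2) ^ Suc n))"
      unfolding w_def by (rule ennreal_suminf_cmult)
    also have "\<dots> = y"
      by (subst suminf_ennreal_eq[OF _ power_half_series]) auto
    finally have "(\<Sum>n. w n) = y" .
    then have "gsum g P \<le> y" if "packing_of P E" "snd ` P \<subseteq> range d" for P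
      using gsum_le_suminf_if_radii_bounded[OF that bound] by simp
    then have "packing_sup g (range d) E 1 \<le> y"
      unfolding packing_sup_def by (auto intro: SUP_least)
    then have "packing_premeasure0 g (range d) E \<le> y"
      unfolding packing_premeasure0_eq_INF_packing_sup by (auto intro: INF_lower2[of 1])
    then show ?thesis
      unfolding lower_packing_premeasure0_def
      using \<open>scale (range d)\<close> by (auto intro: INF_lower2)
  qed
  then show ?thesis
    by (metis dense_ge le_zero_eq)
qed

theorem proposition2p11:
  fixes g :: "real \<Rightarrow> real" and E :: "'a::metric_space set"
  assumes "separable_space (euclidean :: 'a topology)"
    and "hausdorff_function g"
  shows "lower_packing_premeasure0 g E = 0 \<longleftrightarrow> lower_box0 g E = 0"
  using lower_box0_le_lower_packing_premeasure0[of g E]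
    lower_packing_premeasure0_eq_0_if_lower_box0[of g E]
  by auto

end
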